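(* Suppose Assumption A holds and Assumption B holds for some $p\ge2$. Let $\{(x^k,m^k)\}_{k\ge0}$ be generated by Algorithm 1 with $q=p-1$, step sizes $\{\eta_k\}_{k\ge0}$, and parameters $\{(\gamma_{k,t},\theta_{k,t})\}_{1\le t\le p-1,k\ge0}$ satisfying, for all $k\ge0$, $\sum_{t=1}^{p-1}\theta_{k,t}/\gamma_{k,t}^{j}=1$ for $j=1,\dots,p-1$ and $\sum_{t=1}^{p-1}\theta_{k,t}\in(0,1)$. Then for all $k\ge0$, \[ \mathbb{E}_{\xi^{k+1}}[\|m^{k+1}-\nabla f(x^{k+1})\|^2]\le\Big(1-\sum_{t=1}^{p-1}\theta_{k,t}\Big)\|m^k-\nabla f(x^k)\|^2+\frac{pL_p^2\eta_k^{2p}}{(p!)^2\sum_{t=1}^{p-1}\theta_{k,t}}\Big(1+\sum_{t=1}^{p-1}\frac{\theta_{k,t}^2}{\gamma_{k,t}^{2p}}\Big)+(p-1)\sigma^2\sum_{t=1}^{p-1}\theta_{k,t}^2 . \]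
   Context: Problem: minimize $f:\mathbb{R}^n\to\mathbb{R}$, where only a stochastic gradient estimator $G(\cdot;\xi)$ is accessible, $\xi$ being a random variable with sample space $\Xi$. $\|\cdot\|$ is the Euclidean norm. Assumption A: (a) there is a finite $f_{\mathrm{low}}$ with $f(x)\ge f_{\mathrm{low}}$ for all $x$; (b) there is $L_1>0$ with $\|\nabla f(y)-\nabla f(x)\|\le L_1\|y-x\|$ for all $x,y$; (c) $\mathbb{E}_\xi[G(x;\xi)]=\nabla f(x)$ and $\mathbb{E}_\xi[\|G(x;\xi)-\nabla f(x)\|^2]\le\sigma^2$ for all $x$, for some $\sigma>0$. Assumption B: $f$ is $p$ times continuously differentiable for some $p\ge2$ and there is $L_p>0$ with $\|D^pf(y)-D^pf(x)\|_{(p)}\le L_p\|y-x\|$ for all $x,y$, where $D^pf(x)$ is the $p$th derivative as a symmetric $p$-linear form and $\|\mathcal{T}\|_{(p)}=\max\{\mathcal{T}[h_1,\dots,h_p]:\|h_i\|\le 1\}$. Algorithm 1 (SFOM with multi-extrapolated momentum): inputs $x^0\in\mathbb{R}^n$, step sizes $\eta_k>0$, an integer $q\ge1$, extrapolation parameters $\gamma_{k,t}\in(0,1)$ and weighting parameters $\theta_{k,t}\in\mathbb{R}$ ($1\le t\le q$, $k\ge0$) with $\sum_{t=1}^q\theta_{k,t}\in(0,1)$ for all $k\ge0$. Initialize $x^{-1}=x^0$, $m^{-1}=0$, $(\gamma_{-1,t},\theta_{-1,t})=(1,1/q)$ for all $t$. For $k=0,1,2,\dots$: $z^{k,t}=x^k+\frac{1-\gamma_{k-1,t}}{\gamma_{k-1,t}}(x^k-x^{k-1})$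 for $1\le t\le q$; $m^k=(1-\sum_{t=1}^q\theta_{k-1,t})m^{k-1}+\sum_{t=1}^q\theta_{k-1,t}G(z^{k,t};\xi^k)$; $x^{k+1}=x^k-\eta_k m^k/\|m^k\|$. Here $\xi^0,\xi^1,\dots$ are independent samples of $\xi$ (and $m^k\neq0$ is implicitly assumed). $\mathbb{E}_{\xi^{k+1}}[\cdot]$ denotes expectation with respect to $\xi^{k+1}$ conditional on $\xi^0,\dots,\xi^k$. *)

theory Defs
  imports "HOL-Analysis.Analysis" "HOL-Probability.Probability"
begin

text \<open>Higher derivatives of f : R^n -> R (here 'a :: euclidean_space) as symmetric
multilinear forms, evaluated on a list of directions:
  hder 0 f x [] = f x,
  hder (k+1) f x (h # hs) = D (y |-> hder k f y hs)(x)[h].\<close>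
fun hder :: "nat \<Rightarrow> ('a::euclidean_space \<Rightarrow> real) \<Rightarrow> 'a \<Rightarrow> 'a list \<Rightarrow> real" where
  "hder 0 f x hs = f x"
| "hder (Suc k) f x hs = frechet_derivative (\<lambda>y. hder k f y (tl hs)) (at x) (hd hs)"

definition p_times_cont_diff :: "nat \<Rightarrow> ('a::euclidean_space \<Rightarrow> real) \<Rightarrow> bool" where
  "p_times_cont_diff p f \<longleftrightarrow>
     (\<forall>k<p. \<forall>hs. length hs = k \<longrightarrow> (\<forall>x. (\<lambda>y. hder k f y hs) differentiable (at x))) \<and>
     (\<forall>hs. length hs = p \<longrightarrow> continuous_on UNIV (\<lambda>y. hder p f y hs))"

text \<open>Assumption B: Lipschitz continuity of D^p f in the norm
  ||T||_(p) = max { T[h_1,...,h_p] : ||h_i|| <= 1 }, written out pointwise.\<close>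
definition assumption_B :: "nat \<Rightarrow> real \<Rightarrow> ('a::euclidean_space \<Rightarrow> real) \<Rightarrow> bool" where
  "assumption_B p Lp f \<longleftrightarrow> 2 \<le> p \<and> p_times_cont_diff p f \<and> Lp > 0 \<and>
     (\<forall>x y hs. length hs = p \<and> (\<forall>h\<in>set hs. norm h \<le> 1) \<longrightarrow>
        hder p f y hs - hder p f x hs \<le> Lp * norm (y - x))"

definition assumption_A ::
  "('a::euclidean_space \<Rightarrow> real) \<Rightarrow> ('a \<Rightarrow> 'a) \<Rightarrow> ('a \<Rightarrow> 'b \<Rightarrow> 'a) \<Rightarrow> 'b measure
    \<Rightarrow> real \<Rightarrow> real \<Rightarrow> bool" where
  "assumption_A f gf G M L1 \<sigma> \<longleftrightarrow>
     (\<exists>flow. \<forall>x. f x \<ge> flow) \<and>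
     (\<forall>x. GDERIV f x :> gf x) \<and>
     L1 > 0 \<and> (\<forall>x y. norm (gf y - gf x) \<le> L1 * norm (y - x)) \<and>
     \<sigma> > 0 \<and>
     (\<forall>x. integrable M (G x) \<and> (\<integral>\<omega>. G x \<omega> \<partial>M) = gf x \<and>
          (\<integral>\<^sup>+\<omega>. ennreal ((norm (G x \<omega> - gf x))\<^sup>2) \<partial>M) \<le> ennreal (\<sigma>\<^sup>2))"

text \<open>Algorithm 1.  State at step k is (x^{k-1}, x^k, m^{k-1}); parameters at index
k-1 = -1 are (gamma,theta) = (1, 1/q).  xi is the sequence of samples.\<close>
definition zpt :: "real \<Rightarrow> 'a::real_vector \<Rightarrow> 'a \<Rightarrow> 'a" where
  "zpt g xprev x = x + ((1 - g) / g) *\<^sub>R (x - xprev)"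

fun alg1 :: "('a::real_normed_vector \<Rightarrow> 'b \<Rightarrow> 'a) \<Rightarrow> nat \<Rightarrow> 'a \<Rightarrow> (nat \<Rightarrow> real)
    \<Rightarrow> (nat \<Rightarrow> nat \<Rightarrow> real) \<Rightarrow> (nat \<Rightarrow> nat \<Rightarrow> real) \<Rightarrow> (nat \<Rightarrow> 'b) \<Rightarrow> nat \<Rightarrow> 'a \<times> 'a \<times> 'a" where
  "alg1 G q x0 \<eta> \<gamma> \<theta> \<xi> 0 = (x0, x0, 0)"
| "alg1 G q x0 \<eta> \<gamma> \<theta> \<xi> (Suc k) =
    (let (xp, xk, mp) = alg1 G q x0 \<eta> \<gamma> \<theta> \<xi> k;
         g = (\<lambda>t. if k = 0 then 1 else \<gamma> (k - 1) t);
         th = (\<lambda>t. if k = 0 then 1 / real q else \<theta> (k - 1) t);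
         mk = (1 - (\<Sum>t=1..q. th t)) *\<^sub>R mp + (\<Sum>t=1..q. th t *\<^sub>R G (zpt (g t) xp xk) (\<xi> k))
     in (xk, xk - (\<eta> k / norm mk) *\<^sub>R mk, mk))"

definition alg1_x where
  "alg1_x G q x0 \<eta> \<gamma> \<theta> \<xi> k = fst (snd (alg1 G q x0 \<eta> \<gamma> \<theta> \<xi> k))"

definition alg1_m where
  "alg1_m G q x0 \<eta> \<gamma> \<theta> \<xi> k = snd (snd (alg1 G q x0 \<eta> \<gamma> \<theta> \<xi> (Suc k)))"

end

theory Submission
  imports Defs
begin

text \<open>The new momentum error splits into the contracted old error (1 - S)(m - \<nabla>f x),
  a deterministic bias, and zero-mean noise at the extrapolation points.  All these points
  lie on the line through the new iterate x' in the direction of the last step, at signed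
  distances \<eta> and (1 - 1/\<gamma>_t)\<eta>.  Along that line the gradient is a polynomial of degree
  p - 1 up to a remainder of size L_p |\<tau>|^p / p!, and the moment conditions
  \<Sum>_t \<theta>_t / \<gamma>_t^j = 1 make the weighted combination annihilate every term of degree
  1, ..., p - 1, so only the remainders survive in the bias.  Young's inequality with weight S
  and the variance bound finish the estimate.\<close>

lemma abs_le_of_deriv_bound_power_nonneg:
  fixes h h' :: "real \<Rightarrow> real"
  assumes h0: "h 0 = 0" and der: "\<And>t. (h has_real_derivative h' t) (at t)"
    and bnd: "\<And>t. \<bar>h' t\<bar> \<le> c * \<bar>t\<bar> ^ n" and x: "0 \<le> x"
  shows "\<bar>h x\<bar> \<le> c * x ^ Suc n / Suc n"
proof -
  have pow: "((\<lambda>t. c * t ^ Suc n / Suc n) has_real_derivative c * t ^ n) (at t)" for t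
    using DERIV_cdivide[OF DERIV_cmult[OF DERIV_pow[of "Suc n" t]], of c "Suc n"] by simp
  have "c * 0 ^ Suc n / Suc n - h 0 \<le> c * x ^ Suc n / Suc n - h x"
    by (rule DERIV_nonneg_imp_nondecreasing[OF x], rule exI, rule conjI, rule DERIV_diff[OF pow der])
      (use bnd in \<open>smt (verit) abs_of_nonneg zero_le_power\<close>)
  moreover have "c * 0 ^ Suc n / Suc n + h 0 \<le> c * x ^ Suc n / Suc n + h x"
    by (rule DERIV_nonneg_imp_nondecreasing[OF x], rule exI, rule conjI, rule DERIV_add[OF pow der])
      (use bnd in \<open>smt (verit) abs_of_nonneg zero_le_power\<close>)
  ultimately show ?thesis using h0 by (simp add: abs_le_iff)
qed

lemma abs_le_of_deriv_bound_power:
  fixes h h' :: "real \<Rightarrow> real"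
  assumes h0: "h 0 = 0" and der: "\<And>t. (h has_real_derivative h' t) (at t)"
    and bnd: "\<And>t. \<bar>h' t\<bar> \<le> c * \<bar>t\<bar> ^ n"
  shows "\<bar>h x\<bar> \<le> c * \<bar>x\<bar> ^ Suc n / Suc n"
proof (cases "0 \<le> x")
  case True
  then show ?thesis using abs_le_of_deriv_bound_power_nonneg[OF h0 der bnd] by simp
next
  case False
  have "\<bar>(\<lambda>t. h (- t)) (- x)\<bar> \<le> c * (- x) ^ Suc n / Suc n"
  proof (rule abs_le_of_deriv_bound_power_nonneg)
    show "((\<lambda>t. h (- t)) has_real_derivative - h' (- t)) (at t)" for t
      using DERIV_mirror der by blast
    show "\<bar>- h' (- t)\<bar> \<le> c * \<bar>t\<bar> ^ n" for t
      using bnd[of "- t"] by simp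
  qed (use h0 False in simp_all)
  then show ?thesis using False by simp
qed

lemma taylor_remainder_le_of_lipschitz:
  fixes D :: "nat \<Rightarrow> real \<Rightarrow> real"
  assumes "\<And>j t. j < N \<Longrightarrow> (D j has_real_derivative D (Suc j) t) (at t)"
    and "\<And>t. \<bar>D N t - D N 0\<bar> \<le> L * \<bar>t\<bar>"
  shows "\<bar>D 0 x - (\<Sum>j\<le>N. D j 0 * x ^ j / fact j)\<bar> \<le> L * \<bar>x\<bar> ^ Suc N / fact (Suc N)"
  using assms
proof (induction N arbitrary: D x)
  case 0
  then show ?case by simp
next
  case (Suc N)
  define h where "h x = D 0 x - (\<Sum>j\<le>Suc N. D j 0 * x ^ j / fact j)" for x
  define h' where "h' x = D 1 x - (\<Sum>j\<le>N. D (Suc j) 0 * x ^ j / fact j)" for x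
  have h'_bound: "\<bar>h' t\<bar> \<le> L / fact (Suc N) * \<bar>t\<bar> ^ Suc N" for t
    using Suc.IH[of "\<lambda>j. D (Suc j)" t] Suc.prems by (auto simp: h'_def)
  have pow: "((\<lambda>x. x ^ Suc j) has_real_derivative real (Suc j) * t ^ j) (at t)" for j t
    using DERIV_pow[of "Suc j" t] by simp
  have shift: "(\<Sum>j\<le>Suc N. D j 0 * x ^ j / fact j)
      = D 0 0 + (\<Sum>j\<le>N. D (Suc j) 0 * x ^ Suc j / fact (Suc j))" for x
    by (subst sum.atMost_Suc_shift) simp
  have fact_cancel: "(\<Sum>j\<le>N. D (Suc j) 0 * (real (Suc j) * t ^ j) / fact (Suc j))
      = (\<Sum>j\<le>N. D (Suc j) 0 * t ^ j / fact j)" for t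
    by (rule sum.cong) auto
  have h_deriv: "(h has_real_derivative h' t) (at t)" for t
  proof -
    have "((\<lambda>x. D 0 x - (D 0 0 + (\<Sum>j\<le>N. D (Suc j) 0 * x ^ Suc j / fact (Suc j))))
        has_real_derivative D 1 t - (0 + (\<Sum>j\<le>N. D (Suc j) 0 * (real (Suc j) * t ^ j) / fact (Suc j))))
        (at t)"
      using Suc.prems(1)[of 0 t]
      by (intro DERIV_diff DERIV_add DERIV_const DERIV_sum DERIV_cdivide DERIV_cmult pow) simp_all
    then show ?thesis unfolding h_def h'_def shift fact_cancel by simp
  qed
  have "\<bar>h x\<bar> \<le> L / fact (Suc N) * \<bar>x\<bar> ^ Suc (Suc N) / Suc (Suc N)"
    by (rule abs_le_of_deriv_bound_power[OF _ h_deriv h'_bound]) (simp add: h_def)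
  also have "\<dots> = L * \<bar>x\<bar> ^ Suc (Suc N) / fact (Suc (Suc N))"
    by (simp add: fact_Suc[of "Suc N"] field_simps)
  finally show ?case by (simp add: h_def)
qed

lemma sum_weight_one_minus_inverse_power:
  fixes \<theta> \<gamma> :: "'i \<Rightarrow> real"
  assumes mom: "\<And>i. 1 \<le> i \<Longrightarrow> i \<le> j \<Longrightarrow> (\<Sum>t\<in>T. \<theta> t / \<gamma> t ^ i) = 1" and j: "1 \<le> j"
  shows "(\<Sum>t\<in>T. \<theta> t * (1 - 1 / \<gamma> t) ^ j) = (\<Sum>t\<in>T. \<theta> t) - 1"
proof -
  have split0: "{..j} = insert 0 {1..j}" by auto
  have alternating: "(\<Sum>i=1..j. (-1) ^ i * of_nat (j choose i)) = (-1::real)"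
    using choose_alternating_sum[of j, where 'a=real] j by (simp add: split0)
  have expand: "(1 - 1 / g) ^ j = (\<Sum>i\<le>j. (-1) ^ i * of_nat (j choose i) * (1 / g ^ i))" for g :: real
  proof -
    have "(1 - 1 / g) ^ j = (\<Sum>i\<le>j. of_nat (j choose i) * (-1 / g) ^ i)"
      using binomial_ring[of "-1 / g" 1 j] by simp
    then show ?thesis unfolding power_divide by (simp add: mult.commute)
  qed
  have "(\<Sum>t\<in>T. \<theta> t * (1 - 1 / \<gamma> t) ^ j)
      = (\<Sum>i\<le>j. (-1) ^ i * of_nat (j choose i) * (\<Sum>t\<in>T. \<theta> t / \<gamma> t ^ i))"
    unfolding expand sum_distrib_left by (subst sum.swap) (simp add: mult_ac)
  also have "\<dots> = (\<Sum>t\<in>T. \<theta> t) + (\<Sum>i=1..j. (-1) ^ i * of_nat (j choose i))"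
    by (simp add: split0 mom)
  finally show ?thesis using alternating by simp
qed

lemma square_one_plus_sum_le:
  fixes a :: "'i \<Rightarrow> real"
  assumes "finite T"
  shows "(1 + (\<Sum>t\<in>T. a t))\<^sup>2 \<le> (card T + 1) * (1 + (\<Sum>t\<in>T. (a t)\<^sup>2))"
  using sum_squared_le_sum_of_squares[of "case_option 1 a" "insert None (Some ` T)"] assms
  by (simp add: sum.reindex card_image algebra_simps)

lemma norm_one_minus_scaleR_add_squared_le:
  fixes d b :: "'a::real_normed_vector"
  assumes "0 < s" "s \<le> 1"
  shows "(norm ((1 - s) *\<^sub>R d + b))\<^sup>2 \<le> (1 - s) * (norm d)\<^sup>2 + (norm b)\<^sup>2 / s"
proof -
  have "norm ((1 - s) *\<^sub>R d + b) \<le> (1 - s) * norm d + norm b"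
    using norm_triangle_ineq[of "(1 - s) *\<^sub>R d" b] assms by simp
  then have "(norm ((1 - s) *\<^sub>R d + b))\<^sup>2 \<le> ((1 - s) * norm d + norm b)\<^sup>2"
    by (simp add: power_mono)
  also have "\<dots> = (1 - s) * (norm d)\<^sup>2 + (norm b)\<^sup>2 / s - (1 - s) / s * (s * norm d - norm b)\<^sup>2"
    using assms by (simp add: field_simps power2_eq_square)
  also have "\<dots> \<le> (1 - s) * (norm d)\<^sup>2 + (norm b)\<^sup>2 / s"
    using assms by simp
  finally show ?thesis .
qed

lemma integrable_and_integral_norm_squared_le:
  fixes Y :: "'a \<Rightarrow> 'b::real_normed_vector"
  assumes "Y \<in> borel_measurable M" and "0 \<le> c"
    and "(\<integral>\<^sup>+\<omega>. ennreal ((norm (Y \<omega>))\<^sup>2) \<partial>M) \<le> ennreal c"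
  shows "integrable M (\<lambda>\<omega>. (norm (Y \<omega>))\<^sup>2)" and "(\<integral>\<omega>. (norm (Y \<omega>))\<^sup>2 \<partial>M) \<le> c"
proof -
  show int: "integrable M (\<lambda>\<omega>. (norm (Y \<omega>))\<^sup>2)"
    using assms by (intro integrableI_bounded) (auto simp: le_less_trans)
  have "ennreal (\<integral>\<omega>. (norm (Y \<omega>))\<^sup>2 \<partial>M) \<le> ennreal c"
    using assms(3) by (subst nn_integral_eq_integral[OF int, symmetric]) simp_all
  then show "(\<integral>\<omega>. (norm (Y \<omega>))\<^sup>2 \<partial>M) \<le> c"
    using \<open>0 \<le> c\<close> by (auto simp: ennreal_le_iff2)
qed

text \<open>The cross term between the deterministic part and the centred noise
  integrates to zero; the noise itself is bounded by Cauchy-Schwarz over the index set.\<close>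
lemma (in prob_space) nn_integral_norm_squared_add_centered_le:
  fixes Y :: "'i \<Rightarrow> 'a \<Rightarrow> 'b::euclidean_space" and c :: "'i \<Rightarrow> real" and \<sigma> :: real
  assumes int: "\<And>t. t \<in> T \<Longrightarrow> integrable M (Y t)"
    and centered: "\<And>t. t \<in> T \<Longrightarrow> (\<integral>\<omega>. Y t \<omega> \<partial>M) = 0"
    and var: "\<And>t. t \<in> T \<Longrightarrow> (\<integral>\<^sup>+\<omega>. ennreal ((norm (Y t \<omega>))\<^sup>2) \<partial>M) \<le> ennreal (\<sigma>\<^sup>2)"
  shows "(\<integral>\<^sup>+\<omega>. ennreal ((norm (a + (\<Sum>t\<in>T. c t *\<^sub>R Y t \<omega>)))\<^sup>2) \<partial>M)
     \<le> ennreal ((norm a)\<^sup>2 + card T * \<sigma>\<^sup>2 * (\<Sum>t\<in>T. (c t)\<^sup>2))"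
proof -
  define F where "F = (\<lambda>\<omega>. (norm a)\<^sup>2 + 2 * (a \<bullet> (\<Sum>t\<in>T. c t *\<^sub>R Y t \<omega>))
      + card T * (\<Sum>t\<in>T. (c t)\<^sup>2 * (norm (Y t \<omega>))\<^sup>2))"
  have sq_int: "integrable M (\<lambda>\<omega>. (norm (Y t \<omega>))\<^sup>2)"
    and sq_le: "(\<integral>\<omega>. (norm (Y t \<omega>))\<^sup>2 \<partial>M) \<le> \<sigma>\<^sup>2" if "t \<in> T" for t
    using integrable_and_integral_norm_squared_le[OF _ _ var] int that by auto
  have pointwise: "(norm (a + (\<Sum>t\<in>T. c t *\<^sub>R Y t \<omega>)))\<^sup>2 \<le> F \<omega>" for \<omega>
  proof -
    let ?E = "\<Sum>t\<in>T. c t *\<^sub>R Y t \<omega>"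
    have "norm ?E \<le> (\<Sum>t\<in>T. \<bar>c t\<bar> * norm (Y t \<omega>))"
      using norm_sum[of "\<lambda>t. c t *\<^sub>R Y t \<omega>" T] by simp
    then have "(norm ?E)\<^sup>2 \<le> (\<Sum>t\<in>T. \<bar>c t\<bar> * norm (Y t \<omega>))\<^sup>2"
      by (simp add: power_mono)
    also have "\<dots> \<le> card T * (\<Sum>t\<in>T. (c t)\<^sup>2 * (norm (Y t \<omega>))\<^sup>2)"
      using sum_squared_le_sum_of_squares[of "\<lambda>t. \<bar>c t\<bar> * norm (Y t \<omega>)" T]
      by (simp add: power_mult_distrib mult.commute)
    finally show ?thesis
      by (simp add: F_def power2_norm_eq_inner inner_add_left inner_add_right inner_commute)
  qed
  have cross: "(\<integral>\<omega>. a \<bullet> (\<Sum>t\<in>T. c t *\<^sub>R Y t \<omega>) \<partial>M) = 0"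
    using int centered by (simp add: Bochner_Integration.integral_sum)
  have "integrable M F" and "(\<integral>\<omega>. F \<omega> \<partial>M)
      = (norm a)\<^sup>2 + card T * (\<Sum>t\<in>T. (c t)\<^sup>2 * (\<integral>\<omega>. (norm (Y t \<omega>))\<^sup>2 \<partial>M))"
    using int sq_int cross by (auto simp: F_def Bochner_Integration.integral_sum prob_space)
  moreover have "(\<Sum>t\<in>T. (c t)\<^sup>2 * (\<integral>\<omega>. (norm (Y t \<omega>))\<^sup>2 \<partial>M)) \<le> \<sigma>\<^sup>2 * (\<Sum>t\<in>T. (c t)\<^sup>2)"
    unfolding sum_distrib_left by (rule sum_mono) (metis sq_le mult.commute mult_left_mono zero_le_power2)
  ultimately have "(\<integral>\<omega>. F \<omega> \<partial>M) \<le> (norm a)\<^sup>2 + card T * \<sigma>\<^sup>2 * (\<Sum>t\<in>T. (c t)\<^sup>2)"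
    by (simp add: mult_left_mono mult.assoc)
  moreover have "(\<integral>\<^sup>+\<omega>. ennreal ((norm (a + (\<Sum>t\<in>T. c t *\<^sub>R Y t \<omega>)))\<^sup>2) \<partial>M)
      \<le> ennreal (\<integral>\<omega>. F \<omega> \<partial>M)"
    using pointwise \<open>integrable M F\<close> order_trans[OF zero_le_power2 pointwise]
    by (subst nn_integral_eq_integral[symmetric]) (auto intro!: nn_integral_mono ennreal_leI)
  ultimately show ?thesis
    using ennreal_leI order_trans by blast
qed

lemma hder_along_line_has_real_derivative:
  fixes f :: "'a::euclidean_space \<Rightarrow> real"
  assumes "(\<lambda>y. hder k f y hs) differentiable (at (a + \<tau> *\<^sub>R e))"
  shows "((\<lambda>\<tau>. hder k f (a + \<tau> *\<^sub>R e) hs)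
           has_real_derivative hder (Suc k) f (a + \<tau> *\<^sub>R e) (e # hs)) (at \<tau>)"
proof -
  let ?F = "frechet_derivative (\<lambda>y. hder k f y hs) (at (a + \<tau> *\<^sub>R e))"
  have F: "((\<lambda>y. hder k f y hs) has_derivative ?F) (at (a + \<tau> *\<^sub>R e))"
    using assms frechet_derivative_works by blast
  have "((\<lambda>\<tau>. a + \<tau> *\<^sub>R e) has_derivative (\<lambda>h. h *\<^sub>R e)) (at \<tau>)"
    by (auto intro!: derivative_eq_intros)
  from diff_chain_at[OF this F]
  have "((\<lambda>\<tau>. hder k f (a + \<tau> *\<^sub>R e) hs) has_derivative (\<lambda>h. ?F (h *\<^sub>R e))) (at \<tau>)"
    by (simp add: o_def)
  moreover have "(\<lambda>h. ?F (h *\<^sub>R e)) = (\<lambda>h. ?F e * h)"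
    using linear_scale[OF has_derivative_linear[OF F]] by (auto simp: mult.commute)
  ultimately show ?thesis
    by (simp add: has_field_derivative_def)
qed

lemma gradient_taylor_along_line:
  fixes f :: "'a::euclidean_space \<Rightarrow> real"
  assumes grad: "\<And>x. GDERIV f x :> gf x" and B: "assumption_B p Lp f"
    and e: "norm e \<le> 1" and u: "norm u \<le> 1"
  obtains c :: "nat \<Rightarrow> real" where
    "\<And>\<tau>. \<bar>(gf (a + \<tau> *\<^sub>R e) - gf a) \<bullet> u - (\<Sum>j=1..p-1. c j * \<tau> ^ j)\<bar> \<le> Lp * \<bar>\<tau>\<bar> ^ p / fact p"
proof -
  from B have p: "Suc (p - 1) = p" and Lp: "0 < Lp"
    and diff: "\<And>k hs x. k < p \<Longrightarrow> length hs = k \<Longrightarrow> (\<lambda>y. hder k f y hs) differentiable (at x)"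
    and lip: "\<And>x y hs. length hs = p \<Longrightarrow> \<forall>h\<in>set hs. norm h \<le> 1 \<Longrightarrow>
        hder p f y hs - hder p f x hs \<le> Lp * norm (y - x)"
    unfolding assumption_B_def p_times_cont_diff_def by auto
  define D where "D j \<tau> = hder (Suc j) f (a + \<tau> *\<^sub>R e) (replicate j e @ [u])" for j \<tau>
  have D0: "D 0 \<tau> = gf (a + \<tau> *\<^sub>R e) \<bullet> u" for \<tau>
    using frechet_derivative_at[OF grad[unfolded gderiv_def], symmetric]
    by (simp add: D_def inner_commute)
  have "(D j has_real_derivative D (Suc j) \<tau>) (at \<tau>)" if "j < p - 1" for j \<tau>
    unfolding D_def replicate_Suc append_Cons
    by (rule hder_along_line_has_real_derivative, rule diff) (use that in auto)
  moreover have "\<bar>D (p - 1) \<tau> - D (p - 1) 0\<bar> \<le> Lp * \<bar>\<tau>\<bar>" for \<tau>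
  proof -
    have "\<bar>D (p - 1) \<tau> - D (p - 1) 0\<bar> \<le> Lp * norm (\<tau> *\<^sub>R e)"
      using lip[of "replicate (p - 1) e @ [u]" a "a + \<tau> *\<^sub>R e"]
        lip[of "replicate (p - 1) e @ [u]" "a + \<tau> *\<^sub>R e" a] e u p
      by (simp add: D_def abs_le_iff norm_minus_commute)
    also have "\<dots> \<le> Lp * \<bar>\<tau>\<bar>"
      using e Lp by (simp add: mult_left_le)
    finally show ?thesis .
  qed
  ultimately have "\<bar>D 0 \<tau> - (\<Sum>j\<le>p - 1. D j 0 * \<tau> ^ j / fact j)\<bar> \<le> Lp * \<bar>\<tau>\<bar> ^ p / fact p" for \<tau>
    using taylor_remainder_le_of_lipschitz[of "p - 1" D Lp \<tau>] p by simp
  moreover have "{..p - 1} = insert 0 {1..p - 1}" by auto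
  ultimately show ?thesis
    by (intro that[of "\<lambda>j. D j 0 / fact j"]) (simp add: D0 algebra_simps)
qed

lemma extrapolation_annihilates_polynomial:
  fixes \<theta> \<gamma> :: "'i \<Rightarrow> real" and c :: "nat \<Rightarrow> real"
  assumes mom: "\<And>j. 1 \<le> j \<Longrightarrow> j \<le> q \<Longrightarrow> (\<Sum>t\<in>T. \<theta> t / \<gamma> t ^ j) = 1"
  shows "(1 - (\<Sum>t\<in>T. \<theta> t)) * (\<Sum>j=1..q. c j * \<eta> ^ j)
       + (\<Sum>t\<in>T. \<theta> t * (\<Sum>j=1..q. c j * ((1 - 1 / \<gamma> t) * \<eta>) ^ j)) = 0"
proof -
  have "(\<Sum>t\<in>T. \<theta> t * (\<Sum>j=1..q. c j * ((1 - 1 / \<gamma> t) * \<eta>) ^ j))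
      = (\<Sum>j=1..q. c j * \<eta> ^ j * (\<Sum>t\<in>T. \<theta> t * (1 - 1 / \<gamma> t) ^ j))"
    by (simp add: sum_distrib_left power_mult_distrib mult_ac sum.swap[of _ T])
  also have "\<dots> = (\<Sum>j=1..q. c j * \<eta> ^ j * ((\<Sum>t\<in>T. \<theta> t) - 1))"
    using sum_weight_one_minus_inverse_power[OF mom] by (intro sum.cong) auto
  also have "\<dots> = (\<Sum>j=1..q. c j * \<eta> ^ j) * ((\<Sum>t\<in>T. \<theta> t) - 1)"
    by (rule sum_distrib_right[symmetric])
  finally show ?thesis
    by (simp add: algebra_simps)
qed

lemma extrapolated_gradient_bias_le:
  fixes f :: "'a::euclidean_space \<Rightarrow> real" and \<theta> \<gamma> :: "nat \<Rightarrow> real"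
  assumes grad: "\<And>x. GDERIV f x :> gf x" and B: "assumption_B p Lp f"
    and e: "norm e \<le> 1" and \<eta>: "0 \<le> \<eta>"
    and gam: "\<And>t. t \<in> {1..p-1} \<Longrightarrow> 0 < \<gamma> t \<and> \<gamma> t < 1"
    and mom: "\<And>j. 1 \<le> j \<Longrightarrow> j \<le> p - 1 \<Longrightarrow> (\<Sum>t=1..p-1. \<theta> t / \<gamma> t ^ j) = 1"
    and S: "0 \<le> (\<Sum>t=1..p-1. \<theta> t)" "(\<Sum>t=1..p-1. \<theta> t) \<le> 1"
  shows "norm ((1 - (\<Sum>t=1..p-1. \<theta> t)) *\<^sub>R (gf (a + \<eta> *\<^sub>R e) - gf a)
            + (\<Sum>t=1..p-1. \<theta> t *\<^sub>R (gf (a + ((1 - 1 / \<gamma> t) * \<eta>) *\<^sub>R e) - gf a)))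
     \<le> Lp * \<eta> ^ p / fact p * (1 + (\<Sum>t=1..p-1. \<bar>\<theta> t\<bar> / \<gamma> t ^ p))"
    (is "norm ?b \<le> ?K * (1 + ?\<Gamma>)")
proof (cases "?b = 0")
  case True
  have "0 \<le> ?\<Gamma>"
    using gam by (intro sum_nonneg) (auto intro: divide_nonneg_pos)
  then show ?thesis
    using True B \<eta> by (simp add: assumption_B_def)
next
  case False
  let ?S = "\<Sum>t=1..p-1. \<theta> t"
  define \<tau> where "\<tau> t = (1 - 1 / \<gamma> t) * \<eta>" for t
  define u where "u = ?b /\<^sub>R norm ?b"
  have "norm u \<le> 1"
    using False by (simp add: u_def)
  then obtain c where taylor:
    "\<And>\<tau>. \<bar>(gf (a + \<tau> *\<^sub>R e) - gf a) \<bullet> u - (\<Sum>j=1..p-1. c j * \<tau> ^ j)\<bar>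
       \<le> Lp * \<bar>\<tau>\<bar> ^ p / fact p"
    using gradient_taylor_along_line[OF grad B e] by blast
  define R where "R \<tau> = (gf (a + \<tau> *\<^sub>R e) - gf a) \<bullet> u - (\<Sum>j=1..p-1. c j * \<tau> ^ j)" for \<tau>
  have tau: "\<bar>\<tau> t\<bar> ^ p \<le> \<eta> ^ p / \<gamma> t ^ p" if "t \<in> {1..p-1}" for t
  proof -
    have "\<bar>\<tau> t\<bar> \<le> \<eta> / \<gamma> t"
      using gam[OF that] \<eta> mult_left_mono[of "\<gamma> t" 2 \<eta>]
      by (simp add: \<tau>_def abs_le_iff field_simps)
    from power_mono[OF this abs_ge_zero] show ?thesis
      by (simp add: power_divide)
  qed
  have "norm ?b = ?b \<bullet> u"
    using False by (simp add: u_def dot_square_norm power2_eq_square)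
  also have "\<dots> = ((1 - ?S) * R \<eta> + (\<Sum>t=1..p-1. \<theta> t * R (\<tau> t)))
      + ((1 - ?S) * (\<Sum>j=1..p-1. c j * \<eta> ^ j) + (\<Sum>t=1..p-1. \<theta> t * (\<Sum>j=1..p-1. c j * \<tau> t ^ j)))"
    by (simp add: R_def \<tau>_def inner_sum_left algebra_simps sum.distrib sum_subtractf)
  also have "\<dots> = (1 - ?S) * R \<eta> + (\<Sum>t=1..p-1. \<theta> t * R (\<tau> t))"
    using extrapolation_annihilates_polynomial[where q="p - 1" and c=c and \<eta>=\<eta>, OF mom]
    by (simp add: \<tau>_def)
  also have "\<dots> \<le> (1 - ?S) * \<bar>R \<eta>\<bar> + (\<Sum>t=1..p-1. \<bar>\<theta> t\<bar> * \<bar>R (\<tau> t)\<bar>)"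
    using S by (intro add_mono mult_left_mono sum_mono) (auto simp: abs_mult[symmetric])
  also have "\<dots> \<le> 1 * ?K + (\<Sum>t=1..p-1. \<bar>\<theta> t\<bar> * (?K / \<gamma> t ^ p))"
  proof (intro add_mono mult_mono sum_mono mult_left_mono)
    show "\<bar>R \<eta>\<bar> \<le> ?K" using taylor[of \<eta>] \<eta> by (simp add: R_def)
  next
    fix t assume "t \<in> {1..p-1}"
    then show "\<bar>R (\<tau> t)\<bar> \<le> ?K / \<gamma> t ^ p"
    proof -
      have "\<bar>R (\<tau> t)\<bar> \<le> Lp / fact p * \<bar>\<tau> t\<bar> ^ p"
        using taylor[of "\<tau> t"] by (simp add: R_def)
      also have "\<dots> \<le> Lp / fact p * (\<eta> ^ p / \<gamma> t ^ p)"
        using B tau[OF \<open>t \<in> {1..p-1}\<close>] by (intro mult_left_mono) (auto simp: assumption_B_def)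
      finally show ?thesis by simp
    qed
  qed (use S B in \<open>auto simp: assumption_B_def\<close>)
  also have "\<dots> = ?K * (1 + ?\<Gamma>)"
    by (simp add: sum_distrib_left algebra_simps)
  finally show ?thesis .
qed

lemma extrapolated_gradient_bias_squared_le:
  fixes f :: "'a::euclidean_space \<Rightarrow> real" and \<theta> \<gamma> :: "nat \<Rightarrow> real"
  assumes grad: "\<And>x. GDERIV f x :> gf x" and B: "assumption_B p Lp f"
    and e: "norm e \<le> 1" and \<eta>: "0 \<le> \<eta>"
    and gam: "\<And>t. t \<in> {1..p-1} \<Longrightarrow> 0 < \<gamma> t \<and> \<gamma> t < 1"
    and mom: "\<And>j. 1 \<le> j \<Longrightarrow> j \<le> p - 1 \<Longrightarrow> (\<Sum>t=1..p-1. \<theta> t / \<gamma> t ^ j) = 1"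
    and S: "0 \<le> (\<Sum>t=1..p-1. \<theta> t)" "(\<Sum>t=1..p-1. \<theta> t) \<le> 1"
  shows "(norm ((1 - (\<Sum>t=1..p-1. \<theta> t)) *\<^sub>R (gf (a + \<eta> *\<^sub>R e) - gf a)
            + (\<Sum>t=1..p-1. \<theta> t *\<^sub>R (gf (a + ((1 - 1 / \<gamma> t) * \<eta>) *\<^sub>R e) - gf a))))\<^sup>2
     \<le> p * Lp\<^sup>2 * \<eta> ^ (2 * p) / (fact p)\<^sup>2 * (1 + (\<Sum>t=1..p-1. (\<theta> t)\<^sup>2 / \<gamma> t ^ (2 * p)))"
    (is "(norm ?b)\<^sup>2 \<le> _")
proof -
  let ?K = "Lp * \<eta> ^ p / fact p"
  have p: "card {1..p-1} + 1 = p"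
    using B by (simp add: assumption_B_def)
  have "(norm ?b)\<^sup>2 \<le> (?K * (1 + (\<Sum>t=1..p-1. \<bar>\<theta> t\<bar> / \<gamma> t ^ p)))\<^sup>2"
    using extrapolated_gradient_bias_le[OF assms] by (simp add: power_mono)
  also have "\<dots> \<le> ?K\<^sup>2 * (p * (1 + (\<Sum>t=1..p-1. (\<bar>\<theta> t\<bar> / \<gamma> t ^ p)\<^sup>2)))"
    unfolding power_mult_distrib
    using square_one_plus_sum_le[of "{1..p-1}" "\<lambda>t. \<bar>\<theta> t\<bar> / \<gamma> t ^ p"] p
    by (intro mult_left_mono) (simp_all flip: of_nat_Suc)
  also have "\<dots> = p * Lp\<^sup>2 * \<eta> ^ (2 * p) / (fact p)\<^sup>2 * (1 + (\<Sum>t=1..p-1. (\<theta> t)\<^sup>2 / \<gamma> t ^ (2 * p)))"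
    by (simp add: power_mult_distrib power_divide power_mult[symmetric] mult.commute)
  finally show ?thesis .
qed

text \<open>Since \<eta> / norm 0 = 0, the unit direction e = m / norm m used in the proof is 0
  when m = 0, so x = x' + \<eta> e holds without a case split.\<close>
lemma (in prob_space) momentum_error_step:
  fixes f :: "'c::euclidean_space \<Rightarrow> real" and G :: "'c \<Rightarrow> 'a \<Rightarrow> 'c" and \<theta> \<gamma> :: "nat \<Rightarrow> real"
  assumes A: "assumption_A f gf G M L1 \<sigma>" and B: "assumption_B p Lp f" and \<eta>: "0 \<le> \<eta>"
    and gam: "\<And>t. t \<in> {1..p-1} \<Longrightarrow> 0 < \<gamma> t \<and> \<gamma> t < 1"
    and mom: "\<And>j. 1 \<le> j \<Longrightarrow> j \<le> p - 1 \<Longrightarrow> (\<Sum>t=1..p-1. \<theta> t / \<gamma> t ^ j) = 1"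
    and S: "0 < (\<Sum>t=1..p-1. \<theta> t)" "(\<Sum>t=1..p-1. \<theta> t) < 1"
    and x': "x' = x - (\<eta> / norm m) *\<^sub>R m"
  shows "(\<integral>\<^sup>+\<omega>. ennreal ((norm ((1 - (\<Sum>t=1..p-1. \<theta> t)) *\<^sub>R m
            + (\<Sum>t=1..p-1. \<theta> t *\<^sub>R G (zpt (\<gamma> t) x x') \<omega>) - gf x'))\<^sup>2) \<partial>M)
     \<le> ennreal ((1 - (\<Sum>t=1..p-1. \<theta> t)) * (norm (m - gf x))\<^sup>2
          + p * Lp\<^sup>2 * \<eta> ^ (2 * p) / ((fact p)\<^sup>2 * (\<Sum>t=1..p-1. \<theta> t))
              * (1 + (\<Sum>t=1..p-1. (\<theta> t)\<^sup>2 / \<gamma> t ^ (2 * p)))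
          + real (p - 1) * \<sigma>\<^sup>2 * (\<Sum>t=1..p-1. (\<theta> t)\<^sup>2))"
proof -
  let ?S = "\<Sum>t=1..p-1. \<theta> t"
  let ?bias = "p * Lp\<^sup>2 * \<eta> ^ (2 * p) / (fact p)\<^sup>2
    * (1 + (\<Sum>t=1..p-1. (\<theta> t)\<^sup>2 / \<gamma> t ^ (2 * p)))"
  from A have grad: "\<And>x. GDERIV f x :> gf x"
    and G_int: "\<And>x. integrable M (G x)" and G_mean: "\<And>x. (\<integral>\<omega>. G x \<omega> \<partial>M) = gf x"
    and G_var: "\<And>x. (\<integral>\<^sup>+\<omega>. ennreal ((norm (G x \<omega> - gf x))\<^sup>2) \<partial>M) \<le> ennreal (\<sigma>\<^sup>2)"
    unfolding assumption_A_def by auto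
  define e where "e = m /\<^sub>R norm m"
  define z where "z t = zpt (\<gamma> t) x x'" for t
  define b where "b = (1 - ?S) *\<^sub>R (gf x - gf x') + (\<Sum>t=1..p-1. \<theta> t *\<^sub>R (gf (z t) - gf x'))"
  have e: "norm e \<le> 1"
    by (cases "m = 0") (simp_all add: e_def)
  have x: "x = x' + \<eta> *\<^sub>R e"
    by (simp add: x' e_def divide_inverse)
  have z: "z t = x' + ((1 - 1 / \<gamma> t) * \<eta>) *\<^sub>R e" if "t \<in> {1..p-1}" for t
  proof -
    have "z t = x' + ((1 - \<gamma> t) / \<gamma> t * - \<eta>) *\<^sub>R e"
      by (simp add: z_def zpt_def x)
    also have "(1 - \<gamma> t) / \<gamma> t * - \<eta> = (1 - 1 / \<gamma> t) * \<eta>"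
      using gam[OF that] by (simp add: field_simps)
    finally show ?thesis .
  qed
  have z_sum: "(\<Sum>t=1..p-1. \<theta> t *\<^sub>R (gf (z t) - gf x'))
      = (\<Sum>t=1..p-1. \<theta> t *\<^sub>R (gf (x' + ((1 - 1 / \<gamma> t) * \<eta>) *\<^sub>R e) - gf x'))"
    by (rule sum.cong) (simp_all add: z)
  have "(norm b)\<^sup>2 \<le> ?bias"
    unfolding b_def z_sum x
    using S by (intro extrapolated_gradient_bias_squared_le[OF grad B e \<eta> gam mom]) simp_all
  then have deterministic:
    "(norm ((1 - ?S) *\<^sub>R (m - gf x) + b))\<^sup>2 \<le> (1 - ?S) * (norm (m - gf x))\<^sup>2 + ?bias / ?S"
    using norm_one_minus_scaleR_add_squared_le[of ?S "m - gf x" b] S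
    by (smt (verit, best) divide_right_mono)
  have decomposition: "(1 - ?S) *\<^sub>R m + (\<Sum>t=1..p-1. \<theta> t *\<^sub>R G (z t) \<omega>) - gf x'
      = ((1 - ?S) *\<^sub>R (m - gf x) + b) + (\<Sum>t=1..p-1. \<theta> t *\<^sub>R (G (z t) \<omega> - gf (z t)))" for \<omega>
    by (simp add: b_def algebra_simps sum.distrib sum_subtractf scaleR_sum_left)
  have "(\<integral>\<^sup>+\<omega>. ennreal ((norm ((1 - ?S) *\<^sub>R m + (\<Sum>t=1..p-1. \<theta> t *\<^sub>R G (z t) \<omega>) - gf x'))\<^sup>2) \<partial>M)
      \<le> ennreal ((norm ((1 - ?S) *\<^sub>R (m - gf x) + b))\<^sup>2
                   + card {1..p-1} * \<sigma>\<^sup>2 * (\<Sum>t=1..p-1. (\<theta> t)\<^sup>2))"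
    unfolding decomposition
    by (rule nn_integral_norm_squared_add_centered_le) (use G_int G_mean G_var prob_space in simp_all)
  also have "\<dots> \<le> ennreal ((1 - ?S) * (norm (m - gf x))\<^sup>2 + ?bias / ?S
                         + real (p - 1) * \<sigma>\<^sup>2 * (\<Sum>t=1..p-1. (\<theta> t)\<^sup>2))"
    using deterministic by (intro ennreal_leI) simp
  finally show ?thesis
    by (simp add: z_def)
qed

lemma alg1_cong_prefix:
  "(\<And>j. j < n \<Longrightarrow> \<xi> j = \<xi>' j) \<Longrightarrow> alg1 G q x0 \<eta> \<gamma> \<theta> \<xi> n = alg1 G q x0 \<eta> \<gamma> \<theta> \<xi>' n"
proof (induction n)
  case (Suc n)
  then have "alg1 G q x0 \<eta> \<gamma> \<theta> \<xi> n = alg1 G q x0 \<eta> \<gamma> \<theta> \<xi>' n" and "\<xi> n = \<xi>' n"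
    by simp_all
  then show ?case
    by (simp only: alg1.simps)
qed simp

lemma alg1_Suc_eq:
  "alg1 G q x0 \<eta> \<gamma> \<theta> \<xi> (Suc k) =
    (alg1_x G q x0 \<eta> \<gamma> \<theta> \<xi> k,
     alg1_x G q x0 \<eta> \<gamma> \<theta> \<xi> k
       - (\<eta> k / norm (alg1_m G q x0 \<eta> \<gamma> \<theta> \<xi> k)) *\<^sub>R alg1_m G q x0 \<eta> \<gamma> \<theta> \<xi> k,
     alg1_m G q x0 \<eta> \<gamma> \<theta> \<xi> k)"
  by (cases "alg1 G q x0 \<eta> \<gamma> \<theta> \<xi> k") (auto simp: alg1_m_def alg1_x_def Let_def)

lemma alg1_x_Suc:
  "alg1_x G q x0 \<eta> \<gamma> \<theta> \<xi> (Suc k)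
    = alg1_x G q x0 \<eta> \<gamma> \<theta> \<xi> k
      - (\<eta> k / norm (alg1_m G q x0 \<eta> \<gamma> \<theta> \<xi> k)) *\<^sub>R alg1_m G q x0 \<eta> \<gamma> \<theta> \<xi> k"
  by (simp only: alg1_x_def[of _ _ _ _ _ _ _ "Suc k"] alg1_Suc_eq fst_conv snd_conv)

lemma alg1_m_Suc:
  "alg1_m G q x0 \<eta> \<gamma> \<theta> \<xi> (Suc k)
    = (1 - (\<Sum>t=1..q. \<theta> k t)) *\<^sub>R alg1_m G q x0 \<eta> \<gamma> \<theta> \<xi> k
      + (\<Sum>t=1..q. \<theta> k t *\<^sub>R
           G (zpt (\<gamma> k t) (alg1_x G q x0 \<eta> \<gamma> \<theta> \<xi> k) (alg1_x G q x0 \<eta> \<gamma> \<theta> \<xi> (Suc k)))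
             (\<xi> (Suc k)))"
  unfolding alg1_m_def[of G q x0 \<eta> \<gamma> \<theta> \<xi> "Suc k"]
  unfolding alg1.simps(2)[of G q x0 \<eta> \<gamma> \<theta> \<xi> "Suc k"]
  unfolding alg1_Suc_eq alg1_x_Suc
  by (simp add: Let_def)

theorem lemma3p6:
  fixes f :: "'a::euclidean_space \<Rightarrow> real" and gf :: "'a \<Rightarrow> 'a"
    and G :: "'a \<Rightarrow> 'b \<Rightarrow> 'a" and M :: "'b measure"
    and L1 Lp \<sigma> :: real and p :: nat and x0 :: 'a
    and \<eta> :: "nat \<Rightarrow> real" and \<gamma> \<theta> :: "nat \<Rightarrow> nat \<Rightarrow> real" and \<xi> :: "nat \<Rightarrow> 'b" and k :: nat
  assumes M: "prob_space M"
    and A: "assumption_A f gf G M L1 \<sigma>"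
    and B: "assumption_B p Lp f"
    and eta: "\<And>k. \<eta> k > 0"
    and gam: "\<And>k t. 1 \<le> t \<Longrightarrow> t \<le> p - 1 \<Longrightarrow> 0 < \<gamma> k t \<and> \<gamma> k t < 1"
    and mom: "\<And>k j. 1 \<le> j \<Longrightarrow> j \<le> p - 1 \<Longrightarrow> (\<Sum>t=1..p-1. \<theta> k t / \<gamma> k t ^ j) = 1"
    and thsum: "\<And>k. 0 < (\<Sum>t=1..p-1. \<theta> k t) \<and> (\<Sum>t=1..p-1. \<theta> k t) < 1"
    and xi: "\<And>k. \<xi> k \<in> space M"
  shows "(\<integral>\<^sup>+\<omega>. ennreal ((norm (alg1_m G (p-1) x0 \<eta> \<gamma> \<theta> (\<xi>(Suc k := \<omega>)) (Suc k)
                         - gf (alg1_x G (p-1) x0 \<eta> \<gamma> \<theta> \<xi> (Suc k))))\<^sup>2) \<partial>M)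
       \<le> ennreal ((1 - (\<Sum>t=1..p-1. \<theta> k t)) * (norm (alg1_m G (p-1) x0 \<eta> \<gamma> \<theta> \<xi> k
                         - gf (alg1_x G (p-1) x0 \<eta> \<gamma> \<theta> \<xi> k)))\<^sup>2
          + real p * Lp\<^sup>2 * \<eta> k ^ (2*p) / ((fact p)\<^sup>2 * (\<Sum>t=1..p-1. \<theta> k t))
              * (1 + (\<Sum>t=1..p-1. (\<theta> k t)\<^sup>2 / \<gamma> k t ^ (2*p)))
          + real (p - 1) * \<sigma>\<^sup>2 * (\<Sum>t=1..p-1. (\<theta> k t)\<^sup>2))"
proof -
  interpret prob_space M by (rule M)
  have past: "alg1 G (p-1) x0 \<eta> \<gamma> \<theta> (\<xi>(Suc k := \<omega>)) j = alg1 G (p-1) x0 \<eta> \<gamma> \<theta> \<xi> j"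
    if "j \<le> Suc k" for j \<omega>
    by (rule alg1_cong_prefix) (use that in auto)
  have x_past: "alg1_x G (p-1) x0 \<eta> \<gamma> \<theta> (\<xi>(Suc k := \<omega>)) j = alg1_x G (p-1) x0 \<eta> \<gamma> \<theta> \<xi> j"
    if "j \<le> Suc k" for j \<omega>
    by (simp only: alg1_x_def past[OF that])
  have m_past: "alg1_m G (p-1) x0 \<eta> \<gamma> \<theta> (\<xi>(Suc k := \<omega>)) k = alg1_m G (p-1) x0 \<eta> \<gamma> \<theta> \<xi> k" for \<omega>
    by (simp only: alg1_m_def past[OF order_refl])
  have gam': "\<And>t. t \<in> {1..p-1} \<Longrightarrow> 0 < \<gamma> k t \<and> \<gamma> k t < 1"
    using gam by simp
  show ?thesis
    unfolding alg1_m_Suc x_past[OF le_SucI[OF order_refl]] x_past[OF order_refl] m_past fun_upd_same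
    by (rule momentum_error_step[OF A B less_imp_le[OF eta] gam' mom
          thsum[THEN conjunct1] thsum[THEN conjunct2] alg1_x_Suc])
qed

end
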